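(* Let $f$ be a probability density on $\mathbb{R}$ with unit second moment which is $g$-concentrated (with error functions $\lambda_n$). Suppose there exist $a_1,a_2,C_1,C_2>0$ with $C_1e^{-a_1v^2}\le f(v)\le C_2e^{a_2v^2}$ for all $v\in\mathbb{R}$. Then the family of conditioned tensorisations $F_N$ of $f$ is log-scalable with constant $$C_F=\max\{|\log C_1|,|\log C_2|\}+\max\{a_1,a_2\}+\sup_{N}\left|\frac{\log\left(2(2\pi)^{-1/2}+2\lambda_N(N)\right)}{N}-\frac{\log N}{2N}-\frac{\log\left(|\mathbb{S}^{N-1}|N^{\frac{N-2}{2}}\right)}{N}\right|,$$ and this supremum is finite.
   Context: $\mathbb{S}^{N-1}(r)$ is the sphere of radius $r$ in $\mathbb{R}^N$ with uniform probability measure $d\sigma^N_r$; $|\mathbb{S}^{n-1}|$ is the surface area of the unit sphere in $\mathbb{R}^n$. For a probability density $f$ on $\mathbb{R}$ with unit second moment, $\mathcal{Z}_N(f,r)=\int_{\mathbb{S}^{N-1}(r)}f^{\otimes N}d\sigma^N_r$ and the conditioned tensorisation is $F_N=f^{\otimes N}/\mathcal{Z}_N(f,\sqrt N)$ (a density w.r.t. $d\sigma^N_{\sqrt N}$). $f$ is $g$-concentrated if $\mathcal{Z}_N$ is well defined and for each fixed $k$, $\mathcal{Z}_{N-k}(f,\sqrt u)=\frac{2}{(N-k)^{1/2}|\mathbb{S}^{N-k-1}|u^{(N-k-2)/2}}\left(g(u-(N-k),N-k)+\lambda_{N-k}(u)\right)$, where $g$ is non-negative and bounded, $g(0,N)=(2\pi)^{-1/2}$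 for all $N$, $\lim_{N\to\infty}\sup_u|\lambda_N(u)|=0$, and for every $R>0$, $\lim_{N\to\infty}\sup_{|x|<R}|g(x,N)-(2\pi)^{-1/2}|=0$. A family $\{F_N\}$ is log-scalable with constant $C_F>0$ (independent of $N$) if $\sup_{\bm v\in\mathbb{S}^{N-1}(\sqrt N)}|\log F_N(\bm v)|\le C_FN$ for all $N$. *)

theory Defs
  imports "HOL-Analysis.Analysis"
begin

text \<open>Points of R^N are functions nat => real, extensional on {..<N}
  (the space of PiM {..<N} (\<lambda>_. lborel)).\<close>

definition RN :: "nat \<Rightarrow> (nat \<Rightarrow> real) measure" where
  "RN N = PiM {..<N} (\<lambda>_. lborel)"

definition eucl_norm :: "nat \<Rightarrow> (nat \<Rightarrow> real) \<Rightarrow> real" where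
  "eucl_norm N x = sqrt (\<Sum>i<N. (x i)\<^sup>2)"

definition sphereN :: "nat \<Rightarrow> real \<Rightarrow> (nat \<Rightarrow> real) set" where
  "sphereN N r = {x \<in> space (RN N). eucl_norm N x = r}"

definition ballN :: "nat \<Rightarrow> real \<Rightarrow> (nat \<Rightarrow> real) set" where
  "ballN N r = {x \<in> space (RN N). eucl_norm N x < r}"

text \<open>Uniform probability measure d sigma^N_r on S^{N-1}(r): the image of the uniform
  (normalised Lebesgue) measure on the ball of radius r under radial projection onto
  the sphere (the cone measure, which is the normalised surface measure).\<close>
definition sphere_measure :: "nat \<Rightarrow> real \<Rightarrow> (nat \<Rightarrow> real) measure" where
  "sphere_measure N r =
     distr (uniform_measure (RN N) (ballN N r)) (RN N)
       (\<lambda>x. restrict (\<lambda>i. r * x i / eucl_norm N x) {..<N})"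

definition sphere_area :: "nat \<Rightarrow> real" where
  "sphere_area n = 2 * pi powr (real n / 2) / Gamma (real n / 2)"

definition tensor :: "nat \<Rightarrow> (real \<Rightarrow> real) \<Rightarrow> (nat \<Rightarrow> real) \<Rightarrow> real" where
  "tensor N f v = (\<Prod>i<N. f (v i))"

definition ZN :: "nat \<Rightarrow> (real \<Rightarrow> real) \<Rightarrow> real \<Rightarrow> real" where
  "ZN N f r = integral\<^sup>L (sphere_measure N r) (tensor N f)"

text \<open>Conditioned tensorisation F_N (density w.r.t. sigma^N_{sqrt N}).\<close>
definition cond_tensor :: "(real \<Rightarrow> real) \<Rightarrow> nat \<Rightarrow> (nat \<Rightarrow> real) \<Rightarrow> real" where
  "cond_tensor f N v = tensor N f v / ZN N f (sqrt (real N))"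

definition prob_density_unit_moment :: "(real \<Rightarrow> real) \<Rightarrow> bool" where
  "prob_density_unit_moment f \<longleftrightarrow>
     f \<in> borel_measurable borel \<and> (\<forall>v. 0 \<le> f v) \<and>
     integrable lborel f \<and> integral\<^sup>L lborel f = 1 \<and>
     integrable lborel (\<lambda>v. v\<^sup>2 * f v) \<and> integral\<^sup>L lborel (\<lambda>v. v\<^sup>2 * f v) = 1"

text \<open>g-concentration with error functions lam.  The requirement "for each fixed k,
  formula for Z_{N-k}" is stated for every dimension n = N - k >= 1 and every u > 0.\<close>
definition g_concentrated ::
  "(real \<Rightarrow> real) \<Rightarrow> (real \<Rightarrow> nat \<Rightarrow> real) \<Rightarrow> (nat \<Rightarrow> real \<Rightarrow> real) \<Rightarrow> bool" where
  "g_concentrated f g lam \<longleftrightarrow>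
     (\<forall>N\<ge>1. \<forall>r>0. integrable (sphere_measure N r) (tensor N f)) \<and>
     (\<forall>n\<ge>1. \<forall>u>0. ZN n f (sqrt u) =
         2 / (sqrt (real n) * sphere_area n * u powr ((real n - 2) / 2))
           * (g (u - real n) n + lam n u)) \<and>
     (\<forall>x n. 0 \<le> g x n) \<and> (\<exists>B. \<forall>x n. g x n \<le> B) \<and>
     (\<forall>n. g 0 n = 1 / sqrt (2 * pi)) \<and>
     (\<forall>\<epsilon>>0. \<exists>N0. \<forall>n\<ge>N0. \<forall>u>0. \<bar>lam n u\<bar> \<le> \<epsilon>) \<and>
     (\<forall>R>0. \<forall>\<epsilon>>0. \<exists>N0. \<forall>n\<ge>N0. \<forall>x. \<bar>x\<bar> < R \<longrightarrow> \<bar>g x n - 1 / sqrt (2 * pi)\<bar> \<le> \<epsilon>)"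

definition log_scalable :: "(nat \<Rightarrow> (nat \<Rightarrow> real) \<Rightarrow> real) \<Rightarrow> real \<Rightarrow> bool" where
  "log_scalable F C \<longleftrightarrow> C > 0 \<and>
     (\<forall>N\<ge>1. \<forall>v\<in>sphereN N (sqrt (real N)). \<bar>ln (F N v)\<bar> \<le> C * real N)"

end

theory Submission
  imports Defs
begin

text \<open>On the sphere of radius sqrt N we have sum v_i^2 = N, so the Gaussian bounds on f give
  |log (f(v_1) ... f(v_N))| <= (max |log C_i| + max a_i) N. The normalising constant
  Z_N(f, sqrt N) is given exactly by g-concentration at u = N, where g(0,N) = (2 pi)^(-1/2),
  and |log Z_N| / N is at most the N-th element of the set whose supremum enters C_F.
  That set is bounded: lambda_N(N) -> 0 keeps the first logarithm bounded, and
  Gamma(N/2) = (N/2)^(N/2) e^O(N) makes log (|S^(N-1)| N^((N-2)/2)) = O(N).\<close>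

lemma ln_Gamma_half_add_two:
  assumes "m \<ge> 1"
  shows "ln (Gamma (real (m + 2) / 2)) = ln (real m / 2) + ln (Gamma (real m / 2))"
proof -
  have pos: "real m / 2 > 0" using assms by simp
  have "Gamma (real (m + 2) / 2) = Gamma (real m / 2 + 1)" by (simp add: field_simps)
  also have "\<dots> = real m / 2 * Gamma (real m / 2)"
    using pos by (intro Gamma_plus1) (auto elim!: nonpos_Ints_cases)
  finally show ?thesis using pos by (simp only: ln_mult_pos Gamma_real_pos)
qed

lemma ln_Gamma_half_le:
  assumes "n \<ge> 1"
  shows "ln (Gamma (real n / 2)) \<le> ln 2 + real n / 2 * ln (real n)"
  using assms
proof (induction n rule: nat_induct2)
  case 1
  have "sqrt pi \<le> 2" using pi_less_4 real_sqrt_le_iff[of pi 4] by (simp add: real_sqrt_four)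
  then show ?case using Gamma_one_half_real by (simp add: real_sqrt_four)
next
  case (step n)
  show ?case
  proof (cases "n = 0")
    case False
    then have n: "real n \<ge> 1" by simp
    have mono: "ln (real n) \<le> ln (real (n + 2))" using n by simp
    have "ln (Gamma (real (n + 2) / 2)) \<le> ln (real n) + real n / 2 * ln (real n)"
      using step.IH n ln_Gamma_half_add_two[of n] by (simp add: ln_div)
    also have "\<dots> \<le> ln (real (n + 2)) + real n / 2 * ln (real (n + 2))"
      using mono n by (intro add_mono mult_left_mono) auto
    moreover have "real (n + 2) / 2 * ln (real (n + 2))
        = ln (real (n + 2)) + real n / 2 * ln (real (n + 2))"
      by (simp add: field_simps)
    moreover have "0 \<le> ln (2::real)" by simp
    ultimately show ?thesis by linarith
  qed simp
qed simp

lemma ln_Gamma_half_ge: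
  assumes "n \<ge> 1"
  shows "- ln 2 + (real n - 2) / 2 * (ln (real n) - ln 6) \<le> ln (Gamma (real n / 2))"
  using assms
proof (induction n rule: nat_induct2)
  case 1
  have "sqrt 6 / 2 = sqrt (6 / 4)" by (simp only: real_sqrt_divide real_sqrt_four)
  also have "\<dots> \<le> sqrt pi" using pi_gt3 by simp
  finally have "ln (sqrt 6 / 2) \<le> ln (sqrt pi)" by simp
  then show ?case using Gamma_one_half_real by (simp add: ln_div ln_sqrt)
next
  case (step n)
  show ?case
  proof (cases "n = 0")
    case False
    then have n: "real n \<ge> 1" by simp
    \<comment> \<open>from n to n + 2 the bound grows faster than ln Gamma by at most
      n/2 * ln (1 + 2/n) - ln 3 \<le> 1 - ln 3 \<le> 0\<close>
    have "1 + 2 / real n = real (n + 2) / real n" using n by (simp add: field_simps)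
    then have "real n / 2 * (ln (real (n + 2)) - ln (real n)) = real n / 2 * ln (1 + 2 / real n)"
      using n by (simp add: ln_divide_pos)
    also have "\<dots> \<le> real n / 2 * (2 / real n)"
      using n by (intro mult_left_mono ln_add_one_self_le_self) auto
    also have "\<dots> \<le> ln 3" using n exp_le by (simp add: ln_ge_iff)
    finally have growth: "real n / 2 * (ln (real (n + 2)) - ln (real n)) \<le> ln 3" .
    have "ln (6::real) = ln 2 + ln 3" using ln_mult[of 2 3] by simp
    then show ?thesis
      using step.IH n growth ln_Gamma_half_add_two[of n]
      by (simp add: ln_div field_simps)
  qed simp
qed simp

lemma abs_ln_sphere_area_scaled_le:
  assumes "n \<ge> 1"
  shows "\<bar>ln (sphere_area n * real n powr ((real n - 2) / 2))\<bar> \<le> 6 * real n"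
proof -
  have n: "real n \<ge> 1" using assms by simp
  have "ln (sphere_area n * real n powr ((real n - 2) / 2))
      = ln 2 + real n / 2 * ln pi - ln (Gamma (real n / 2)) + (real n - 2) / 2 * ln (real n)"
    unfolding sphere_area_def using n by (simp add: ln_mult_pos ln_divide_pos)
  moreover note ln_Gamma_half_le[OF assms] ln_Gamma_half_ge[OF assms]
  moreover have "ln (2::real) \<le> 1" "ln (6::real) \<le> 5"
    using ln_le_minus_one[of 2] ln_le_minus_one[of 6] by simp_all
  moreover have "0 \<le> real n / 2 * ln pi" "real n / 2 * ln pi \<le> real n / 2 * 3"
    using n ln_le_minus_one[of pi] pi_less_4 pi_ge_two by (auto intro!: mult_left_mono)
  moreover have "ln (real n) \<le> real n" using ln_le_minus_one[of "real n"] n by simp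
  moreover have "(real n - 2) / 2 * ln 6 \<le> real n / 2 * 5"
    using n \<open>ln 6 \<le> 5\<close> by (intro mult_mono) auto
  moreover have "(real n - 2) / 2 * (ln (real n) - ln 6)
      = (real n - 2) / 2 * ln (real n) - (real n - 2) / 2 * ln 6"
    "(real n - 2) / 2 * ln (real n) = real n / 2 * ln (real n) - ln (real n)"
    by (simp_all add: algebra_simps diff_divide_distrib)
  ultimately show ?thesis using n by linarith
qed

text \<open>Holds without sign conditions because \<open>ln x = ln \<bar>x\<bar>\<close> and \<open>ln 0 = 0\<close> for reals.\<close>
lemma abs_ln_divide_le: "\<bar>ln (x / y)\<bar> \<le> \<bar>ln x - ln (y :: real)\<bar>"
  by (simp add: ln_div)

lemma sum_squares_sphereN:
  assumes "v \<in> sphereN N r"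
  shows "(\<Sum>i<N. (v i)\<^sup>2) = r\<^sup>2"
proof -
  have "sqrt (\<Sum>i<N. (v i)\<^sup>2) = r" using assms unfolding sphereN_def eucl_norm_def by simp
  moreover have "(\<Sum>i<N. (v i)\<^sup>2) \<ge> 0" by (simp add: sum_nonneg)
  ultimately show ?thesis by auto
qed

lemma abs_ln_le_of_gaussian_bounds:
  fixes x y :: real
  assumes "C1 > 0" "C1 * exp (- a1 * x\<^sup>2) \<le> y" "y \<le> C2 * exp (a2 * x\<^sup>2)"
  shows "\<bar>ln y\<bar> \<le> max \<bar>ln C1\<bar> \<bar>ln C2\<bar> + max a1 a2 * x\<^sup>2"
proof -
  have "0 < C1 * exp (- a1 * x\<^sup>2)" using assms(1) by simp
  then have "0 < y" using assms(2) by linarith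
  moreover from this have "0 < C2"
    using assms(3) by (metis exp_gt_zero order_less_le_trans zero_less_mult_pos2)
  ultimately have "ln C1 - a1 * x\<^sup>2 \<le> ln y" "ln y \<le> ln C2 + a2 * x\<^sup>2"
    using assms ln_mono[of "C1 * exp (- a1 * x\<^sup>2)" y] ln_mono[of y "C2 * exp (a2 * x\<^sup>2)"]
    by (simp_all add: ln_mult_pos)
  moreover have "a1 * x\<^sup>2 \<le> max a1 a2 * x\<^sup>2" "a2 * x\<^sup>2 \<le> max a1 a2 * x\<^sup>2"
    by (simp_all add: mult_right_mono)
  ultimately show ?thesis by linarith
qed

lemma abs_ln_tensor_le:
  assumes "C1 > 0" and bounds: "\<forall>x. C1 * exp (- a1 * x\<^sup>2) \<le> f x \<and> f x \<le> C2 * exp (a2 * x\<^sup>2)"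
    and "v \<in> sphereN N (sqrt (real N))"
  shows "\<bar>ln (tensor N f v)\<bar> \<le> (max \<bar>ln C1\<bar> \<bar>ln C2\<bar> + max a1 a2) * real N"
proof -
  have "f x \<noteq> 0" for x
    using bounds assms(1) by (metis exp_gt_zero mult_pos_pos order_less_le_trans less_irrefl)
  then have "\<bar>ln (tensor N f v)\<bar> = \<bar>\<Sum>i<N. ln (f (v i))\<bar>"
    unfolding tensor_def by (subst ln_prod) auto
  also have "\<dots> \<le> (\<Sum>i<N. max \<bar>ln C1\<bar> \<bar>ln C2\<bar> + max a1 a2 * (v i)\<^sup>2)"
    using abs_ln_le_of_gaussian_bounds assms(1) bounds
    by (intro order_trans[OF sum_abs sum_mono]) blast
  also have "\<dots> = (max \<bar>ln C1\<bar> \<bar>ln C2\<bar> + max a1 a2) * real N"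
    using sum_squares_sphereN[OF assms(3)]
    by (simp add: sum.distrib algebra_simps flip: sum_distrib_left)
  finally show ?thesis .
qed

lemma
  assumes "g_concentrated f g lam"
  shows g_concentrated_ZN_eq: "\<And>n u. n \<ge> 1 \<Longrightarrow> u > 0 \<Longrightarrow> ZN n f (sqrt u) =
           2 / (sqrt (real n) * sphere_area n * u powr ((real n - 2) / 2))
             * (g (u - real n) n + lam n u)"
    and g_concentrated_g_zero: "\<And>n. g 0 n = 1 / sqrt (2 * pi)"
    and g_concentrated_error_small: "\<And>\<epsilon>. \<epsilon> > 0 \<Longrightarrow> \<exists>N0. \<forall>n\<ge>N0. \<forall>u>0. \<bar>lam n u\<bar> \<le> \<epsilon>"
  using assms unfolding g_concentrated_def by (elim conjE; simp)+

lemma ZN_sqrt_dim_eq: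
  assumes "g_concentrated f g lam" "N \<ge> 1"
  shows "ZN N f (sqrt (real N)) = (2 * (1 / sqrt (2 * pi)) + 2 * lam N (real N))
           / (sqrt (real N) * sphere_area N * real N powr ((real N - 2) / 2))"
proof -
  have "ZN N f (sqrt (real N)) = 2 / (sqrt (real N) * sphere_area N * real N powr ((real N - 2) / 2))
      * (1 / sqrt (2 * pi) + lam N (real N))"
    using g_concentrated_ZN_eq[OF assms(1), of N "real N"] assms(2)
    by (simp only: diff_self g_concentrated_g_zero[OF assms(1)])
  then show ?thesis by (simp only: times_divide_eq_left distrib_left add_divide_distrib)
qed

lemma abs_ln_ZN_sqrt_dim_le:
  assumes "g_concentrated f g lam" "N \<ge> 1"
  shows "\<bar>ln (ZN N f (sqrt (real N)))\<bar> \<le> real N *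
           \<bar>ln (2 * (1 / sqrt (2 * pi)) + 2 * lam N (real N)) / real N
            - ln (real N) / (2 * real N)
            - ln (sphere_area N * real N powr ((real N - 2) / 2)) / real N\<bar>"
proof -
  define x where "x = 2 * (1 / sqrt (2 * pi)) + 2 * lam N (real N)"
  define Q where "Q = sphere_area N * real N powr ((real N - 2) / 2)"
  have N: "real N \<ge> 1" using assms(2) by simp
  have "Q > 0" unfolding Q_def sphere_area_def using N by simp
  then have ln_denom: "ln (sqrt (real N) * Q) = ln (real N) / 2 + ln Q"
    using N by (simp add: ln_mult_pos ln_sqrt)
  have "ZN N f (sqrt (real N)) = x / (sqrt (real N) * Q)"
    unfolding x_def Q_def ZN_sqrt_dim_eq[OF assms] by (simp only: mult.assoc)
  then have "\<bar>ln (ZN N f (sqrt (real N)))\<bar> \<le> \<bar>ln x - (ln (real N) / 2 + ln Q)\<bar>"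
    unfolding ln_denom[symmetric] by (simp only: abs_ln_divide_le)
  also have "ln x - (ln (real N) / 2 + ln Q)
      = real N * (ln x / real N - ln (real N) / (2 * real N) - ln Q / real N)"
    using N by (simp add: field_simps)
  finally have "\<bar>ln (ZN N f (sqrt (real N)))\<bar>
      \<le> real N * \<bar>ln x / real N - ln (real N) / (2 * real N) - ln Q / real N\<bar>"
    by (simp add: abs_mult)
  then show ?thesis unfolding x_def Q_def .
qed

lemma g_concentrated_eventually_abs_ln_bounded:
  assumes "g_concentrated f g lam"
  obtains K where "eventually (\<lambda>N. \<bar>ln (2 * (1 / sqrt (2 * pi)) + 2 * lam N (real N))\<bar> \<le> K)
    sequentially"
proof -
  define c :: real where "c = 1 / sqrt (2 * pi)"
  have "c > 0" unfolding c_def by simp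
  then obtain N0 where N0: "\<forall>n\<ge>N0. \<forall>u>0. \<bar>lam n u\<bar> \<le> c / 2"
    using g_concentrated_error_small[OF assms] half_gt_zero by blast
  have "\<bar>ln (2 * c + 2 * lam N (real N))\<bar> \<le> \<bar>ln c\<bar> + \<bar>ln (3 * c)\<bar>" if "N \<ge> max N0 1" for N
  proof -
    have "\<bar>lam N (real N)\<bar> \<le> c / 2" using N0 that by simp
    then have "c \<le> 2 * c + 2 * lam N (real N)" "2 * c + 2 * lam N (real N) \<le> 3 * c"
      by (simp_all add: abs_le_iff)
    then have "ln c \<le> ln (2 * c + 2 * lam N (real N))" "ln (2 * c + 2 * lam N (real N)) \<le> ln (3 * c)"
      using \<open>c > 0\<close> by (simp_all add: ln_mono)
    then show ?thesis by linarith
  qed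
  then show ?thesis unfolding c_def by (rule that[OF eventually_sequentiallyI])
qed

lemma abs_ln_cond_tensor_le:
  "\<bar>ln (cond_tensor f N v)\<bar> \<le> \<bar>ln (tensor N f v)\<bar> + \<bar>ln (ZN N f (sqrt (real N)))\<bar>"
  unfolding cond_tensor_def by (rule order_trans[OF abs_ln_divide_le abs_triangle_ineq4])

lemma bdd_above_scaled_log_terms:
  assumes "eventually (\<lambda>N. \<bar>x N\<bar> \<le> K) sequentially"
  shows "bdd_above {\<bar>x N / real N - ln (real N) / (2 * real N)
            - ln (sphere_area N * real N powr ((real N - 2) / 2)) / real N\<bar> | N. N \<ge> 1}"
proof -
  define s where "s N = \<bar>x N / real N - ln (real N) / (2 * real N)
            - ln (sphere_area N * real N powr ((real N - 2) / 2)) / real N\<bar>" for N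
  have s_le: "s N \<le> K + 1/2 + 6" if "N \<ge> 1" "\<bar>x N\<bar> \<le> K" for N
  proof -
    have N: "real N \<ge> 1" using that(1) by simp
    have x_le: "\<bar>x N / real N\<bar> \<le> K"
      using divide_left_mono[of 1 "real N" "\<bar>x N\<bar>"] N that(2) by (simp add: abs_div)
    have ln_le: "\<bar>ln (real N) / (2 * real N)\<bar> \<le> 1/2"
      using N ln_le_minus_one[of "real N"] by (simp add: abs_div divide_le_eq)
    have area_le: "\<bar>ln (sphere_area N * real N powr ((real N - 2) / 2)) / real N\<bar> \<le> 6"
      using abs_ln_sphere_area_scaled_le[OF that(1)] N by (simp add: abs_div divide_le_eq)
    have triangle: "\<bar>a - b - d\<bar> \<le> \<bar>a\<bar> + \<bar>b\<bar> + \<bar>d\<bar>" for a b d :: real by linarith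
    show ?thesis
      unfolding s_def by (rule order_trans[OF triangle add_mono[OF add_mono[OF x_le ln_le] area_le]])
  qed
  have "eventually (\<lambda>N. norm (s N) \<le> norm (K + 1/2 + 6)) sequentially"
    using eventually_conj[OF assms eventually_ge_at_top[of 1]]
  proof eventually_elim
    case (elim N)
    then have "s N \<le> K + 1/2 + 6" "0 \<le> K" using s_le by (blast, linarith)
    moreover have "0 \<le> s N" unfolding s_def by (rule abs_ge_zero)
    ultimately show ?case by simp
  qed
  then have "Bseq s" by (rule Bseq_eventually_mono) simp
  then have "bdd_above (range s)" by (rule Bseq_bdd_above)
  then show ?thesis by (rule bdd_above_mono) (auto simp: s_def)
qed

theorem theorem3p4:
  fixes f :: "real \<Rightarrow> real" and g :: "real \<Rightarrow> nat \<Rightarrow> real"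
    and lam :: "nat \<Rightarrow> real \<Rightarrow> real" and a1 a2 C1 C2 :: real
  assumes "prob_density_unit_moment f"
    and "g_concentrated f g lam"
    and "a1 > 0" "a2 > 0" "C1 > 0" "C2 > 0"
    and "\<forall>v. C1 * exp (- a1 * v\<^sup>2) \<le> f v \<and> f v \<le> C2 * exp (a2 * v\<^sup>2)"
  defines "S \<equiv> {\<bar>ln (2 * (1 / sqrt (2 * pi)) + 2 * lam N (real N)) / real N
                  - ln (real N) / (2 * real N)
                  - ln (sphere_area N * real N powr ((real N - 2) / 2)) / real N\<bar> | N. N \<ge> 1}"
  shows "bdd_above S \<and>
         log_scalable (cond_tensor f)
           (max \<bar>ln C1\<bar> \<bar>ln C2\<bar> + max a1 a2 + Sup S)"
proof -
  obtain K where "eventually (\<lambda>N. \<bar>ln (2 * (1 / sqrt (2 * pi)) + 2 * lam N (real N))\<bar> \<le> K)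
      sequentially"
    using g_concentrated_eventually_abs_ln_bounded[OF assms(2)] .
  then have bdd: "bdd_above S" unfolding S_def by (rule bdd_above_scaled_log_terms)
  have abs_ln_ZN: "\<bar>ln (ZN N f (sqrt (real N)))\<bar> \<le> real N * Sup S" if "N \<ge> 1" for N
  proof -
    have "\<bar>ln (2 * (1 / sqrt (2 * pi)) + 2 * lam N (real N)) / real N
          - ln (real N) / (2 * real N)
          - ln (sphere_area N * real N powr ((real N - 2) / 2)) / real N\<bar> \<le> Sup S"
      using that unfolding S_def by (intro cSup_upper[OF _ bdd[unfolded S_def]]) blast
    then show ?thesis
      by (rule order_trans[OF abs_ln_ZN_sqrt_dim_le[OF assms(2) that] mult_left_mono]) simp
  qed
  have "0 \<le> Sup S" using order_trans[OF abs_ge_zero abs_ln_ZN[of 1]] by simp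
  then have pos: "max \<bar>ln C1\<bar> \<bar>ln C2\<bar> + max a1 a2 + Sup S > 0" using assms(3) by linarith
  have "\<bar>ln (cond_tensor f N v)\<bar> \<le> (max \<bar>ln C1\<bar> \<bar>ln C2\<bar> + max a1 a2 + Sup S) * real N"
    if "N \<ge> 1" "v \<in> sphereN N (sqrt (real N))" for N v
    using abs_ln_cond_tensor_le[of f N v] abs_ln_tensor_le[OF assms(5,7) that(2)]
      abs_ln_ZN[OF that(1)] by (simp add: algebra_simps)
  with bdd pos show ?thesis unfolding log_scalable_def by blast
qed

end
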